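(* For any distributions (subpopulations) $\mathcal{D}_1,\dots,\mathcal{D}_K$ on $\mathcal{Z}$, any loss $\ell$, any $N\ge1$ and any learning algorithm $\mathcal{A}:\mathcal{Z}^N\to\mathcal{H}$, either the Conservation Condition holds, i.e. $$(f_1({\bm{p}}),\dots,f_K({\bm{p}}))=\nabla L^{\mathrm{same}}({\bm{p}})\quad\text{for all }{\bm{p}}\in\mathbb{R}^K_{\ge0}\setminus\{\mathbf{0}\},$$ or there exists a set $U\subseteq\Delta_K$ of (Lebesgue, on the simplex) measure zero such that for all ${\bm{p}}\in\Delta_K\setminus U$, $$L^*_N({\bm{p}})<L^{\mathrm{same}}({\bm{p}}).$$
   Context: Let $\ell(h,{\bm{z}})$ be a loss on models $h\in\mathcal{H}$ and instances ${\bm{z}}\in\mathcal{Z}$, with all expectations below finite. $\Delta_K=\{{\bm{r}}\in\mathbb{R}^K:{\bm{r}}\ge0,\ \sum_kr_k=1\}$, and $\mathcal{D}_{\bm{q}}=\sum_kq_k\mathcal{D}_k$ for ${\bm{q}}\in\Delta_K$. For ${\bm{q}}\in\Delta_K$ let $\bar e_k({\bm{q}})=\mathbb{E}_{S\sim\mathcal{D}_{\bm{q}}^N}\,\mathbb{E}_{{\bm{z}}\sim\mathcal{D}_k}[\ell(\mathcal{A}(S),{\bm{z}})]$ and $L_N({\bm{p}},{\bm{q}})=\sum_k p_k\bar e_k({\bm{q}})$; $L^*_N({\bm{p}})=\min_{{\bm{q}}\in\Delta_K}L_N({\bm{p}},{\bm{q}})$. Extend to nonzero nonnegative vectors: $f_k({\bm{p}})=\bar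 e_k({\bm{p}}/|{\bm{p}}|)$ with $|{\bm{p}}|=\sum_kp_k$, and $L^{\mathrm{same}}({\bm{p}})=\sum_kp_kf_k({\bm{p}})$ for ${\bm{p}}\in\mathbb{R}^K_{\ge0}\setminus\{\mathbf{0}\}$ (so $L^{\mathrm{same}}({\bm{p}})=L_N({\bm{p}},{\bm{p}})$ on $\Delta_K$). *)

theory Defs
  imports "HOL-Probability.Probability"
begin



text \<open>Probability simplex Delta_K, with the index set {1..K} modelled by a finite type 'k.\<close>
definition prob_simplex :: "(real^('k::finite)) set" where
  "prob_simplex = {r. (\<forall>k. 0 \<le> r $ k) \<and> (\<Sum>k\<in>UNIV. r $ k) = 1}"

definition orthant0 :: "(real^('k::finite)) set" where
  "orthant0 = {p. (\<forall>k. 0 \<le> p $ k)} - {0}"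

definition vsum :: "real^('k::finite) \<Rightarrow> real" where
  "vsum p = (\<Sum>k\<in>UNIV. p $ k)"

definition mixture :: "'z measure \<Rightarrow> ('k::finite \<Rightarrow> 'z measure) \<Rightarrow> real^'k \<Rightarrow> 'z measure" where
  "mixture M D q = measure_of (space M) (sets M)
      (\<lambda>A. \<Sum>k\<in>UNIV. ennreal (q $ k) * emeasure (D k) A)"

definition sample_measure :: "nat \<Rightarrow> 'z measure \<Rightarrow> (nat \<Rightarrow> 'z) measure" where
  "sample_measure N P = PiM {..<N} (\<lambda>_. P)"

definition ebar ::
  "'z measure \<Rightarrow> ('k::finite \<Rightarrow> 'z measure) \<Rightarrow> ('h \<Rightarrow> 'z \<Rightarrow> real) \<Rightarrow> nat
    \<Rightarrow> ((nat \<Rightarrow> 'z) \<Rightarrow> 'h) \<Rightarrow> 'k \<Rightarrow> real^'k \<Rightarrow> real" where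
  "ebar M D loss N Alg k q =
     (\<integral>S. (\<integral>z. loss (Alg S) z \<partial>(D k)) \<partial>(sample_measure N (mixture M D q)))"

definition LN where
  "LN M D loss N Alg p q = (\<Sum>k\<in>UNIV. p $ k * ebar M D loss N Alg k q)"

text \<open>L*_N(p) = min over q in the simplex of L_N(p,q) (taken as an infimum).\<close>
definition Lstar where
  "Lstar M D loss N Alg p = (INF q\<in>prob_simplex. LN M D loss N Alg p q)"

definition fk where
  "fk M D loss N Alg k p = ebar M D loss N Alg k (p /\<^sub>R vsum p)"

definition Lsame where
  "Lsame M D loss N Alg p = (\<Sum>k\<in>UNIV. p $ k * fk M D loss N Alg k p)"

text \<open>U (a subset of the simplex) has (K-1)-dimensional Lebesgue measure zero on the simplex:
  its image under dropping any one coordinate is a Lebesgue null set of R^(K-1).\<close>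
definition simplex_null :: "(real^('k::finite)) set \<Rightarrow> bool" where
  "simplex_null U \<longleftrightarrow>
     (\<forall>k0. (\<lambda>p. restrict (\<lambda>i. p $ i) (UNIV - {k0})) ` U
              \<in> null_sets (PiM (UNIV - {k0}) (\<lambda>_. lborel)))"

end

theory Submission
  imports Defs "HOL-Computational_Algebra.Polynomial"
begin

text \<open>
  Let \<open>C\<^sub>k(\<sigma>)\<close> be the expected loss on \<open>D\<^sub>k\<close> of the algorithm trained on a sample whose
  \<open>i\<close>-th point is drawn from \<open>D\<^bsub>\<sigma> i\<^esub>\<close>. Expanding the product of mixtures gives
  \<open>e\<^sub>k(q) = \<Sum>\<^sub>\<sigma> C\<^sub>k(\<sigma>) \<Prod>\<^sub>i q\<^bsub>\<sigma> i\<^esub>\<close>, a polynomial in \<open>q\<close>. Put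
  \<open>G\<^sub>j(p) = \<Sum>\<^sub>k p\<^sub>k \<partial>\<^sub>j e\<^sub>k(p)\<close>, the gradient of \<open>q \<mapsto> L\<^sub>N(p, q)\<close> at \<open>q = p\<close>.

  If \<open>G\<^sub>j(u)\<close> is independent of \<open>j\<close> at every \<open>u\<close> of the simplex, the Conservation Condition
  holds: differentiating \<open>L\<^sup>s\<^sup>a\<^sup>m\<^sup>e(p) = \<Sum>\<^sub>k p\<^sub>k e\<^sub>k(p/|p|)\<close> yields \<open>f(p)\<close> plus
  \<open>G(p/|p|)\<close> applied to the derivative of \<open>p/|p|\<close>, whose coordinates sum to zero.

  Otherwise some \<open>G\<^sub>j - G\<^sub>j\<^sub>'\<close> is a polynomial that does not vanish on the simplex, so its
  zero set together with the boundary is a null set \<open>U\<close>. A point \<open>p\<close> outside \<open>U\<close> is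
  interior, and the Lagrange condition fails there, so \<open>p\<close> does not minimise \<open>L\<^sub>N(p, \<cdot>)\<close>:
  \<open>L\<^sup>*\<^sub>N(p) < L\<^sub>N(p, p) = L\<^sup>s\<^sup>a\<^sup>m\<^sup>e(p)\<close>.
\<close>

section \<open>Polynomial functions and their zero sets\<close>

inductive polyfun :: "'i set \<Rightarrow> (('i \<Rightarrow> real) \<Rightarrow> real) \<Rightarrow> bool" for I where
  polyfun_const: "polyfun I (\<lambda>x. c)"
| polyfun_var: "i \<in> I \<Longrightarrow> polyfun I (\<lambda>x. x i)"
| polyfun_add: "polyfun I f \<Longrightarrow> polyfun I g \<Longrightarrow> polyfun I (\<lambda>x. f x + g x)"
| polyfun_mult: "polyfun I f \<Longrightarrow> polyfun I g \<Longrightarrow> polyfun I (\<lambda>x. f x * g x)"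

lemma polyfun_sum:
  "finite S \<Longrightarrow> (\<And>s. s \<in> S \<Longrightarrow> polyfun I (f s)) \<Longrightarrow> polyfun I (\<lambda>x. \<Sum>s\<in>S. f s x)"
  by (induction S rule: finite_induct) (auto intro: polyfun.intros)

lemma polyfun_prod:
  "finite S \<Longrightarrow> (\<And>s. s \<in> S \<Longrightarrow> polyfun I (f s)) \<Longrightarrow> polyfun I (\<lambda>x. \<Prod>s\<in>S. f s x)"
  by (induction S rule: finite_induct) (auto intro: polyfun.intros)

lemma polyfun_diff:
  assumes "polyfun I f" "polyfun I g"
  shows "polyfun I (\<lambda>x. f x - g x)"
proof -
  have "polyfun I (\<lambda>x. f x + (-1) * g x)"
    using assms by (intro polyfun_add polyfun_mult polyfun_const)
  then show ?thesis by simp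
qed

lemma polyfun_subst:
  "polyfun I f \<Longrightarrow> (\<And>i. i \<in> I \<Longrightarrow> polyfun J (\<lambda>y. L y i)) \<Longrightarrow> polyfun J (\<lambda>y. f (L y))"
  by (induction rule: polyfun.induct) (auto intro: polyfun.intros)

lemma polyfun_cong_vars: "polyfun I f \<Longrightarrow> (\<And>i. i \<in> I \<Longrightarrow> x i = y i) \<Longrightarrow> f x = f y"
  by (induction rule: polyfun.induct) auto

lemma borel_measurable_polyfun: "polyfun I f \<Longrightarrow> f \<in> borel_measurable (PiM I (\<lambda>_. lborel))"
proof (induction rule: polyfun.induct)
  case (polyfun_var i)
  then have "(\<lambda>x. x i) \<in> measurable (PiM I (\<lambda>_. lborel)) lborel"
    by (rule measurable_component_singleton)
  then show ?case by (simp add: measurable_lborel1)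
qed auto

lemma polyfun_insert_var_poly:
  assumes "polyfun (insert i I) f"
  shows "\<exists>P. (\<forall>n. polyfun I (\<lambda>x. coeff (P x) n)) \<and> (\<forall>x. f x = poly (P x) (x i))"
  using assms
proof (induction rule: polyfun.induct)
  case (polyfun_const c)
  have "polyfun I (\<lambda>x. coeff [:c:] n)" for n
    by (rule polyfun_const)
  then show ?case by (intro exI[of _ "\<lambda>_. [:c:]"]) auto
next
  case (polyfun_var j)
  show ?case
  proof (cases "j = i")
    case True
    have "polyfun I (\<lambda>x. coeff [:0, 1:] n)" for n
      by (rule polyfun_const)
    then show ?thesis using True by (intro exI[of _ "\<lambda>_. [:0, 1:]"]) auto
  next
    case False
    with polyfun_var have "polyfun I (\<lambda>x. coeff [:x j:] n)" for n
      by (cases n) (auto intro: polyfun.intros)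
    then show ?thesis by (intro exI[of _ "\<lambda>x. [:x j:]"]) auto
  qed
next
  case (polyfun_add f g)
  then obtain P Q where "\<forall>n. polyfun I (\<lambda>x. coeff (P x) n)" "\<forall>x. f x = poly (P x) (x i)"
    "\<forall>n. polyfun I (\<lambda>x. coeff (Q x) n)" "\<forall>x. g x = poly (Q x) (x i)"
    by blast
  then show ?case
    by (intro exI[of _ "\<lambda>x. P x + Q x"]) (auto intro: polyfun.intros)
next
  case (polyfun_mult f g)
  then obtain P Q where "\<forall>n. polyfun I (\<lambda>x. coeff (P x) n)" "\<forall>x. f x = poly (P x) (x i)"
    "\<forall>n. polyfun I (\<lambda>x. coeff (Q x) n)" "\<forall>x. g x = poly (Q x) (x i)"
    by blast
  moreover have "polyfun I (\<lambda>x. coeff (P x * Q x) n)" for n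
    unfolding coeff_mult using calculation by (intro polyfun_sum polyfun.polyfun_mult) auto
  ultimately show ?case
    by (intro exI[of _ "\<lambda>x. P x * Q x"]) auto
qed

lemma null_sets_PiM_singleton_finite:
  assumes "finite R"
  shows "PiE {i} (\<lambda>_. R) \<in> null_sets (PiM {i} (\<lambda>_. lborel :: real measure))"
proof -
  interpret product_sigma_finite "\<lambda>_. lborel :: real measure"
    by (simp add: product_sigma_finite_def lborel.sigma_finite_measure_axioms)
  have R: "R \<in> sets borel"
    using assms by (simp add: borel_closed finite_imp_closed)
  show ?thesis
    using R assms by (intro null_setsI sets_PiM_I_finite)
      (auto simp: emeasure_PiM emeasure_lborel_countable countable_finite)
qed

lemma null_sets_PiM_insert_AE_fibers:
  fixes Z :: "('i \<Rightarrow> real) set"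
  assumes "finite I" "i \<notin> I" and Z: "Z \<in> sets (PiM (insert i I) (\<lambda>_. lborel))"
    and fibers: "AE x in PiM I (\<lambda>_. lborel).
      emeasure (PiM {i} (\<lambda>_. lborel)) ((\<lambda>y. merge I {i} (x, y)) -` Z \<inter> space (PiM {i} (\<lambda>_. lborel))) = 0"
  shows "Z \<in> null_sets (PiM (insert i I) (\<lambda>_. lborel))"
proof -
  interpret product_sigma_finite "\<lambda>_::'i. lborel :: real measure"
    by (simp add: product_sigma_finite_def lborel.sigma_finite_measure_axioms)
  have "(\<integral>\<^sup>+x. emeasure (PiM {i} (\<lambda>_. lborel)) ((\<lambda>y. merge I {i} (x, y)) -` Z \<inter> space (PiM {i} (\<lambda>_. lborel)))
      \<partial>PiM I (\<lambda>_. lborel)) = 0"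
    using fibers by (subst nn_integral_cong_AE[where v = "\<lambda>_. 0"]) auto
  then have "emeasure (PiM (I \<union> {i}) (\<lambda>_. lborel)) Z = 0"
    using emeasure_fold_integral[of I "{i}", OF _ assms(1) _] Z assms(2) by simp
  then show ?thesis
    using Z by (intro null_setsI) (auto simp: Un_commute)
qed

lemma polyfun_coeffs_merge:
  assumes "\<And>n. polyfun I (\<lambda>x. coeff (P x) n)" "i \<notin> I"
  shows "P (merge I {i} (x, y)) = P x"
proof (rule poly_eqI)
  show "coeff (P (merge I {i} (x, y))) n = coeff (P x) n" for n
    by (rule polyfun_cong_vars[OF assms(1)]) (use assms(2) in \<open>auto simp: merge_def\<close>)
qed

lemma null_sets_polyfun_zero:
  fixes f :: "('i \<Rightarrow> real) \<Rightarrow> real"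
  assumes "finite I" "polyfun I f" "f x0 \<noteq> 0"
  shows "{x \<in> space (PiM I (\<lambda>_. lborel)). f x = 0} \<in> null_sets (PiM I (\<lambda>_. lborel))"
  using assms
proof (induction I arbitrary: f x0 rule: finite_induct)
  case empty
  then have "f x \<noteq> 0" for x
    using polyfun_cong_vars[of "{}" f x x0] by auto
  then show ?case by simp
next
  case (insert i I)
  obtain P where P_coeff: "\<And>n. polyfun I (\<lambda>x. coeff (P x) n)" and f_eq: "\<And>x. f x = poly (P x) (x i)"
    using polyfun_insert_var_poly[OF insert.prems(1)] by blast
  have "P x0 \<noteq> 0" using insert.prems(2) f_eq by auto
  then obtain n0 where n0: "coeff (P x0) n0 \<noteq> 0" by (metis leading_coeff_neq_0)
  let ?Z = "{x \<in> space (PiM (insert i I) (\<lambda>_. lborel)). f x = 0}"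
  have "?Z \<in> sets (PiM (insert i I) (\<lambda>_. lborel))"
    using borel_measurable_polyfun[OF insert.prems(1)] by (simp add: pred_def[symmetric])
  moreover have "AE x in PiM I (\<lambda>_. lborel). coeff (P x) n0 \<noteq> 0"
    using AE_not_in[OF insert.IH[OF P_coeff n0]] AE_space by eventually_elim auto
  then have "AE x in PiM I (\<lambda>_. lborel). emeasure (PiM {i} (\<lambda>_. lborel))
      ((\<lambda>y. merge I {i} (x, y)) -` ?Z \<inter> space (PiM {i} (\<lambda>_. lborel))) = 0"
  proof eventually_elim
    case (elim x)
    let ?roots = "PiE {i} (\<lambda>_. {t. poly (P x) t = 0})"
    have sub: "(\<lambda>y. merge I {i} (x, y)) -` ?Z \<inter> space (PiM {i} (\<lambda>_. lborel)) \<subseteq> ?roots"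
    proof
      fix y assume y: "y \<in> (\<lambda>y. merge I {i} (x, y)) -` ?Z \<inter> space (PiM {i} (\<lambda>_. lborel))"
      have "merge I {i} (x, y) i = y i"
        using insert.hyps(2) by (simp add: merge_def)
      then have "poly (P x) (y i) = 0"
        using y f_eq[of "merge I {i} (x, y)"] polyfun_coeffs_merge[OF P_coeff insert.hyps(2)] by simp
      moreover have "y \<in> extensional {i}"
        using y by (simp add: space_PiM PiE_def)
      ultimately show "y \<in> ?roots"
        by (simp add: PiE_def)
    qed
    have N: "?roots \<in> null_sets (PiM {i} (\<lambda>_. lborel))"
      using elim by (intro null_sets_PiM_singleton_finite poly_roots_finite) auto
    show ?case
      using emeasure_mono[OF sub null_setsD2[OF N]] null_setsD1[OF N] by simp
  qed
  ultimately show ?case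
    using insert.hyps by (intro null_sets_PiM_insert_AE_fibers)
qed

definition vec_polyfun :: "(real^'k::finite \<Rightarrow> real) \<Rightarrow> bool" where
  "vec_polyfun R \<longleftrightarrow> polyfun UNIV (\<lambda>x. R (vec_lambda x))"

lemma vec_polyfun_subst:
  assumes "vec_polyfun R" "\<And>k. polyfun J (\<lambda>y. L y $ k)"
  shows "polyfun J (\<lambda>y. R (L y))"
  using polyfun_subst[OF assms(1)[unfolded vec_polyfun_def], of J "\<lambda>y k. L y $ k"] assms(2)
  by (simp add: vec_nth_inverse)

lemma vec_polyfun_const: "vec_polyfun (\<lambda>q. c)"
  by (simp add: vec_polyfun_def polyfun_const)

lemma vec_polyfun_component: "vec_polyfun (\<lambda>q. q $ k)"
  by (simp add: vec_polyfun_def polyfun_var)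

lemma vec_polyfun_diff: "vec_polyfun R \<Longrightarrow> vec_polyfun R' \<Longrightarrow> vec_polyfun (\<lambda>q. R q - R' q)"
  by (simp add: vec_polyfun_def polyfun_diff)

lemma vec_polyfun_mult: "vec_polyfun R \<Longrightarrow> vec_polyfun R' \<Longrightarrow> vec_polyfun (\<lambda>q. R q * R' q)"
  by (simp add: vec_polyfun_def polyfun_mult)

lemma vec_polyfun_sum:
  "finite S \<Longrightarrow> (\<And>s. s \<in> S \<Longrightarrow> vec_polyfun (R s)) \<Longrightarrow> vec_polyfun (\<lambda>q. \<Sum>s\<in>S. R s q)"
  by (simp add: vec_polyfun_def polyfun_sum)

lemma vec_polyfun_prod:
  "finite S \<Longrightarrow> (\<And>s. s \<in> S \<Longrightarrow> vec_polyfun (R s)) \<Longrightarrow> vec_polyfun (\<lambda>q. \<Prod>s\<in>S. R s q)"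
  by (simp add: vec_polyfun_def polyfun_prod)

section \<open>Null sets of the simplex\<close>

lemma prob_simplexD:
  assumes "q \<in> prob_simplex"
  shows "0 \<le> q $ k" "(\<Sum>k\<in>UNIV. q $ k) = 1"
  using assms by (auto simp: prob_simplex_def)

text \<open>The inverse of the chart that drops coordinate \<open>k0\<close>, in terms of which \<^const>\<open>simplex_null\<close>
  is defined.\<close>

definition simplex_lift :: "'k::finite \<Rightarrow> ('k \<Rightarrow> real) \<Rightarrow> real^'k" where
  "simplex_lift k0 x = (\<chi> k. if k = k0 then 1 - (\<Sum>j\<in>UNIV - {k0}. x j) else x k)"

lemma polyfun_simplex_lift: "polyfun (UNIV - {k0}) (\<lambda>x. simplex_lift k0 x $ k)"
  unfolding simplex_lift_def
  by (cases "k = k0") (auto intro!: polyfun_diff polyfun_sum polyfun.intros)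

lemma sum_UNIV_remove: "(\<Sum>k\<in>UNIV. f k) = f k0 + (\<Sum>k\<in>UNIV - {k0}. f k)"
  for f :: "'k::finite \<Rightarrow> real"
  by (rule sum.remove) auto

lemma simplex_lift_restrict:
  assumes "p \<in> prob_simplex"
  shows "simplex_lift k0 (restrict (\<lambda>i. p $ i) (UNIV - {k0})) = p"
  using sum_UNIV_remove[of "\<lambda>k. p $ k" k0] prob_simplexD[OF assms]
  by (auto simp: simplex_lift_def vec_eq_iff)

lemma restrict_image_simplex:
  "(\<lambda>p. restrict (\<lambda>i. p $ i) (UNIV - {k0})) ` {p \<in> prob_simplex. P p} =
    {x \<in> space (PiM (UNIV - {k0}) (\<lambda>_. lborel)).
       (\<forall>j\<in>UNIV - {k0}. 0 \<le> x j) \<and> (\<Sum>j\<in>UNIV - {k0}. x j) \<le> 1 \<and> P (simplex_lift k0 x)}"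
    (is "?img = ?A")
proof (intro equalityI subsetI)
  fix x assume "x \<in> ?img"
  then obtain p where p: "p \<in> prob_simplex" "P p" and x: "x = restrict (\<lambda>i. p $ i) (UNIV - {k0})"
    by blast
  have "simplex_lift k0 x = p"
    unfolding x by (rule simplex_lift_restrict[OF p(1)])
  moreover have "(\<Sum>j\<in>UNIV - {k0}. p $ j) \<le> 1"
    using sum_UNIV_remove[of "\<lambda>k. p $ k" k0] prob_simplexD[OF p(1)] prob_simplexD(1)[OF p(1), of k0]
    by linarith
  ultimately show "x \<in> ?A"
    using p prob_simplexD[OF p(1)] by (auto simp: x space_PiM)
next
  fix x assume x: "x \<in> ?A"
  then have "simplex_lift k0 x \<in> prob_simplex"
    using sum_UNIV_remove[of "\<lambda>k. simplex_lift k0 x $ k" k0]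
    by (auto simp: prob_simplex_def simplex_lift_def)
  moreover have "restrict (\<lambda>i. simplex_lift k0 x $ i) (UNIV - {k0}) = x"
    using x by (auto simp: simplex_lift_def space_PiM PiE_def extensional_def)
  ultimately show "x \<in> ?img"
    using x by (intro image_eqI[of _ _ "simplex_lift k0 x"]) auto
qed

lemma simplex_null_zero_set:
  fixes R :: "real^'k::finite \<Rightarrow> real"
  assumes R: "vec_polyfun R" and u: "u \<in> prob_simplex" "R u \<noteq> 0"
  shows "simplex_null {p \<in> prob_simplex. R p = 0}"
  unfolding simplex_null_def
proof
  fix k0 :: 'k
  let ?J = "UNIV - {k0}"
  let ?LB = "PiM ?J (\<lambda>_. lborel) :: ('k \<Rightarrow> real) measure"
  have poly: "polyfun ?J (\<lambda>x. R (simplex_lift k0 x))"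
    by (rule vec_polyfun_subst[OF R polyfun_simplex_lift])
  have "R (simplex_lift k0 (restrict (\<lambda>i. u $ i) ?J)) \<noteq> 0"
    using u by (simp add: simplex_lift_restrict)
  then have null: "{x \<in> space ?LB. R (simplex_lift k0 x) = 0} \<in> null_sets ?LB"
    by (intro null_sets_polyfun_zero[OF _ poly]) auto
  have [measurable]: "(\<lambda>x. R (simplex_lift k0 x)) \<in> borel_measurable ?LB"
    by (rule borel_measurable_polyfun[OF poly])
  have "{x \<in> space ?LB. (\<forall>j\<in>?J. 0 \<le> x j) \<and> (\<Sum>j\<in>?J. x j) \<le> 1 \<and> R (simplex_lift k0 x) = 0}
      \<in> sets ?LB"
    by measurable
  then show "(\<lambda>p. restrict (\<lambda>i. p $ i) ?J) ` {p \<in> prob_simplex. R p = 0} \<in> null_sets ?LB"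
    unfolding restrict_image_simplex by (rule null_sets_subset[OF null]) auto
qed

lemma simplex_null_Un: "simplex_null U \<Longrightarrow> simplex_null V \<Longrightarrow> simplex_null (U \<union> V)"
  by (simp add: simplex_null_def image_Un null_sets.Un)

lemma simplex_null_boundary:
  "simplex_null {p \<in> (prob_simplex :: (real^'k::finite) set). \<exists>k. p $ k = 0}"
proof -
  have "(\<chi> k. 1 / real CARD('k) :: real^'k) \<in> prob_simplex"
    by (simp add: prob_simplex_def)
  moreover have "vec_polyfun (\<lambda>p :: real^'k. \<Prod>k\<in>UNIV. p $ k)"
    by (intro vec_polyfun_prod vec_polyfun_component) simp
  ultimately have "simplex_null {p \<in> (prob_simplex :: (real^'k) set). (\<Prod>k\<in>UNIV. p $ k) = 0}"
    by (intro simplex_null_zero_set) auto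
  then show ?thesis by simp
qed

section \<open>Finite weighted sums of measures\<close>

definition weighted_sum_measure ::
    "'x set \<Rightarrow> 'x set set \<Rightarrow> 's set \<Rightarrow> ('s \<Rightarrow> real) \<Rightarrow> ('s \<Rightarrow> 'x measure) \<Rightarrow> 'x measure" where
  "weighted_sum_measure \<Omega> \<Sigma> S a \<nu> =
     measure_of \<Omega> \<Sigma> (\<lambda>A. \<Sum>s\<in>S. ennreal (a s) * emeasure (\<nu> s) A)"

locale weighted_sum =
  fixes \<Omega> :: "'x set" and \<Sigma> :: "'x set set" and S :: "'s set"
    and a :: "'s \<Rightarrow> real" and \<nu> :: "'s \<Rightarrow> 'x measure"
  assumes finite_S: "finite S" and S_not_empty: "S \<noteq> {}"
    and sets_nu: "\<And>s. s \<in> S \<Longrightarrow> sets (\<nu> s) = \<Sigma>"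
    and space_nu: "\<And>s. s \<in> S \<Longrightarrow> space (\<nu> s) = \<Omega>"
    and a_nonneg: "\<And>s. s \<in> S \<Longrightarrow> 0 \<le> a s"
begin

abbreviation "W \<equiv> weighted_sum_measure \<Omega> \<Sigma> S a \<nu>"

lemma sigma_algebra_components: "sigma_algebra \<Omega> \<Sigma>"
proof -
  obtain s where "s \<in> S"
    using S_not_empty by blast
  then show ?thesis
    using sets.sigma_algebra_axioms[of "\<nu> s"] sets_nu space_nu by simp
qed

lemma sets_W [simp]: "sets W = \<Sigma>" and space_W [simp]: "space W = \<Omega>"
  unfolding weighted_sum_measure_def
  using sigma_algebra.sets_measure_of_eq[OF sigma_algebra_components]
    sigma_algebra.space_measure_of_eq[OF sigma_algebra_components] by auto

lemma emeasure_W: "A \<in> \<Sigma> \<Longrightarrow> emeasure W A = (\<Sum>s\<in>S. ennreal (a s) * emeasure (\<nu> s) A)"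
  unfolding weighted_sum_measure_def
proof (rule emeasure_measure_of_sigma[OF sigma_algebra_components])
  show "positive \<Sigma> (\<lambda>A. \<Sum>s\<in>S. ennreal (a s) * emeasure (\<nu> s) A)"
    by (auto simp: positive_def)
  show "countably_additive \<Sigma> (\<lambda>A. \<Sum>s\<in>S. ennreal (a s) * emeasure (\<nu> s) A)"
  proof (rule countably_additiveI)
    fix A :: "nat \<Rightarrow> 'x set"
    assume A: "range A \<subseteq> \<Sigma>" "disjoint_family A" "\<Union> (range A) \<in> \<Sigma>"
    have "(\<Sum>i. \<Sum>s\<in>S. ennreal (a s) * emeasure (\<nu> s) (A i))
        = (\<Sum>s\<in>S. \<Sum>i. ennreal (a s) * emeasure (\<nu> s) (A i))"
      by (rule suminf_sum) auto
    also have "\<dots> = (\<Sum>s\<in>S. ennreal (a s) * emeasure (\<nu> s) (\<Union> (range A)))"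
      using A sets_nu by (intro sum.cong refl) (simp add: suminf_emeasure)
    finally show "(\<Sum>i. \<Sum>s\<in>S. ennreal (a s) * emeasure (\<nu> s) (A i))
        = (\<Sum>s\<in>S. ennreal (a s) * emeasure (\<nu> s) (\<Union> (range A)))" .
  qed
qed

lemma borel_measurable_component:
  "s \<in> S \<Longrightarrow> f \<in> borel_measurable W \<Longrightarrow> f \<in> borel_measurable (\<nu> s)"
  using sets_nu by (metis measurable_cong_sets sets_W)

lemma nn_integral_W:
  assumes "f \<in> borel_measurable W"
  shows "integral\<^sup>N W f = (\<Sum>s\<in>S. ennreal (a s) * integral\<^sup>N (\<nu> s) f)"
  using assms
proof (induction rule: borel_measurable_induct)
  case (cong f g)
  have "integral\<^sup>N W f = integral\<^sup>N W g"
    using cong by (intro nn_integral_cong) auto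
  moreover have "integral\<^sup>N (\<nu> s) f = integral\<^sup>N (\<nu> s) g" if "s \<in> S" for s
    using cong that space_nu by (intro nn_integral_cong) auto
  ultimately show ?case
    using cong by simp
next
  case (set A)
  then show ?case
    using sets_nu by (simp add: emeasure_W)
next
  case (mult u c)
  have "integral\<^sup>N (\<nu> s) (\<lambda>x. c * u x) = c * integral\<^sup>N (\<nu> s) u" if "s \<in> S" for s
    using nn_integral_cmult[OF borel_measurable_component[OF that mult(2)]] by simp
  then show ?case
    using mult by (simp add: nn_integral_cmult sum_distrib_left mult.left_commute cong: sum.cong)
next
  case (add u v)
  have "integral\<^sup>N (\<nu> s) (\<lambda>x. v x + u x) = integral\<^sup>N (\<nu> s) v + integral\<^sup>N (\<nu> s) u"
    if "s \<in> S" for s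
    using add that by (intro nn_integral_add borel_measurable_component) auto
  then show ?case
    using add by (simp add: nn_integral_add sum.distrib distrib_left cong: sum.cong)
next
  case (seq U)
  have SUP_W: "integral\<^sup>N W (SUP i. U i) = (SUP i. integral\<^sup>N W (U i))"
    using seq nn_integral_monotone_convergence_SUP[of U W] by (simp add: SUP_apply[abs_def])
  have SUP_nu: "integral\<^sup>N (\<nu> s) (SUP i. U i) = (SUP i. integral\<^sup>N (\<nu> s) (U i))" if "s \<in> S" for s
    using seq(3) borel_measurable_component[OF that seq(1)] nn_integral_monotone_convergence_SUP[of U "\<nu> s"]
    by (simp add: SUP_apply[abs_def])
  have "integral\<^sup>N W (SUP i. U i) = (SUP i. \<Sum>s\<in>S. ennreal (a s) * integral\<^sup>N (\<nu> s) (U i))"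
    unfolding SUP_W using seq(5) by simp
  also have "\<dots> = (\<Sum>s\<in>S. SUP i. ennreal (a s) * integral\<^sup>N (\<nu> s) (U i))"
    using \<open>incseq U\<close>
    by (intro ennreal_SUP_sum) (auto simp: incseq_def le_fun_def intro!: mult_left_mono nn_integral_mono)
  also have "\<dots> = (\<Sum>s\<in>S. ennreal (a s) * integral\<^sup>N (\<nu> s) (SUP i. U i))"
    using SUP_nu by (simp add: SUP_mult_left_ennreal)
  finally show ?case .
qed

lemma prob_space_W:
  assumes "sum a S = 1" and prob: "\<And>s. s \<in> S \<Longrightarrow> prob_space (\<nu> s)"
  shows "prob_space W"
proof (rule prob_spaceI)
  have "emeasure (\<nu> s) \<Omega> = 1" if "s \<in> S" for s
    using prob_space.emeasure_space_1[OF prob[OF that]] space_nu[OF that] by simp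
  then have "emeasure W (space W) = (\<Sum>s\<in>S. ennreal (a s))"
    using sets.top[of W] by (simp add: emeasure_W)
  then show "emeasure W (space W) = 1"
    using a_nonneg assms(1) by simp
qed

lemma integrable_component:
  fixes f :: "'x \<Rightarrow> real"
  assumes f: "integrable W f" and s: "s \<in> S" "0 < a s"
  shows "integrable (\<nu> s) f"
proof -
  let ?I = "\<lambda>\<mu>. integral\<^sup>N \<mu> (\<lambda>x. ennreal (norm (f x)))"
  have f_meas: "f \<in> borel_measurable W"
    using f by auto
  have "ennreal (a s) * ?I (\<nu> s) \<le> (\<Sum>s\<in>S. ennreal (a s) * ?I (\<nu> s))"
    using s finite_S by (intro member_le_sum) auto
  also have "\<dots> = ?I W"
    using f_meas by (intro nn_integral_W[symmetric]) auto
  also have "\<dots> < \<infinity>"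
    using f by (simp add: integrable_iff_bounded)
  finally have "?I (\<nu> s) < \<infinity>"
    using s by (cases "?I (\<nu> s) = 0") (auto simp: ennreal_mult_less_top)
  then show ?thesis
    using borel_measurable_component[OF s(1) f_meas] by (simp add: integrable_iff_bounded)
qed

lemma integral_W:
  fixes f :: "'x \<Rightarrow> real"
  assumes f: "integrable W f"
  shows "integral\<^sup>L W f = (\<Sum>s\<in>S. a s * integral\<^sup>L (\<nu> s) f)"
proof -
  \<comment> \<open>Components of weight zero need not integrate \<open>f\<close>.\<close>
  define S' where "S' = {s \<in> S. 0 < a s}"
  have S': "S' \<subseteq> S" "finite S'" "\<And>s. s \<in> S - S' \<Longrightarrow> a s = 0"
    using a_nonneg finite_S by (force simp: S'_def)+
  have int: "integrable (\<nu> s) f" if "s \<in> S'" for s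
    using integrable_component[OF f] that by (auto simp: S'_def)
  have nn: "enn2real (integral\<^sup>N W g) = (\<Sum>s\<in>S'. a s * enn2real (integral\<^sup>N (\<nu> s) g))"
    if g: "g \<in> borel_measurable W" "\<And>s. s \<in> S' \<Longrightarrow> integral\<^sup>N (\<nu> s) g < top" for g
  proof -
    have "integral\<^sup>N W g = (\<Sum>s\<in>S'. ennreal (a s) * integral\<^sup>N (\<nu> s) g)"
      unfolding nn_integral_W[OF g(1)] using S' finite_S by (intro sum.mono_neutral_right) auto
    also have "enn2real \<dots> = (\<Sum>s\<in>S'. a s * enn2real (integral\<^sup>N (\<nu> s) g))"
      using g(2) S' a_nonneg
      by (subst enn2real_sum) (auto simp: enn2real_mult ennreal_mult_less_top intro!: sum.cong)
    finally show ?thesis .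
  qed
  have "integral\<^sup>L W f
      = enn2real (integral\<^sup>N W (\<lambda>x. ennreal (f x))) - enn2real (integral\<^sup>N W (\<lambda>x. ennreal (- f x)))"
    by (rule real_lebesgue_integral_def[OF f])
  also have "\<dots> = (\<Sum>s\<in>S'. a s * enn2real (integral\<^sup>N (\<nu> s) (\<lambda>x. ennreal (f x))))
      - (\<Sum>s\<in>S'. a s * enn2real (integral\<^sup>N (\<nu> s) (\<lambda>x. ennreal (- f x))))"
    using f int
    by (intro arg_cong2[where f = minus] nn) (auto simp: real_integrable_def top.not_eq_extremum)
  also have "\<dots> = (\<Sum>s\<in>S'. a s * integral\<^sup>L (\<nu> s) f)"
    using int
    by (simp add: sum_subtractf[symmetric] right_diff_distrib real_lebesgue_integral_def cong: sum.cong)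
  also have "\<dots> = (\<Sum>s\<in>S. a s * integral\<^sup>L (\<nu> s) f)"
    using S' finite_S by (intro sum.mono_neutral_left) auto
  finally show ?thesis .
qed

end

section \<open>The risks under a mixture are polynomials in the mixture weights\<close>

abbreviation assignments :: "nat \<Rightarrow> (nat \<Rightarrow> 'k::finite) set" where
  "assignments N \<equiv> PiE {..<N} (\<lambda>_. UNIV)"

lemma weighted_sum_mixture:
  fixes D :: "'k::finite \<Rightarrow> 'z measure"
  assumes D_sets: "\<And>k. sets (D k) = sets M" and q: "q \<in> prob_simplex"
  shows "weighted_sum (space M) (sets M) UNIV (\<lambda>k. q $ k) D"
  by unfold_locales (auto simp: D_sets sets_eq_imp_space_eq[OF D_sets] prob_simplexD[OF q])

lemma mixture_eq_weighted_sum_measure: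
  "mixture M D q = weighted_sum_measure (space M) (sets M) UNIV (\<lambda>k. q $ k) D"
  unfolding mixture_def weighted_sum_measure_def ..

lemma
  fixes D :: "'k::finite \<Rightarrow> 'z measure"
  assumes D_sets: "\<And>k. sets (D k) = sets M" and q: "q \<in> prob_simplex"
  shows sets_mixture: "sets (mixture M D q) = sets M"
    and emeasure_mixture: "A \<in> sets M \<Longrightarrow>
      emeasure (mixture M D q) A = (\<Sum>k\<in>UNIV. ennreal (q $ k) * emeasure (D k) A)"
    and prob_space_mixture: "(\<And>k. prob_space (D k)) \<Longrightarrow> prob_space (mixture M D q)"
proof -
  interpret weighted_sum "space M" "sets M" UNIV "\<lambda>k. q $ k" D
    by (rule weighted_sum_mixture[OF D_sets q])
  show "sets (mixture M D q) = sets M"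
    by (simp add: mixture_eq_weighted_sum_measure)
  show "A \<in> sets M \<Longrightarrow>
      emeasure (mixture M D q) A = (\<Sum>k\<in>UNIV. ennreal (q $ k) * emeasure (D k) A)"
    unfolding mixture_eq_weighted_sum_measure by (rule emeasure_W)
  show "(\<And>k. prob_space (D k)) \<Longrightarrow> prob_space (mixture M D q)"
    unfolding mixture_eq_weighted_sum_measure
    by (rule prob_space_W) (use prob_simplexD[OF q] in auto)
qed

lemma weighted_sum_PiM_mixture:
  fixes D :: "'k::finite \<Rightarrow> 'z measure"
  assumes D_sets: "\<And>k. sets (D k) = sets M" and q: "q \<in> prob_simplex"
  shows "weighted_sum (space (PiM {..<N} (\<lambda>_. mixture M D q)))
     (sets (PiM {..<N} (\<lambda>_. mixture M D q))) (assignments N)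
     (\<lambda>\<sigma>. \<Prod>i<N. q $ \<sigma> i) (\<lambda>\<sigma>. PiM {..<N} (\<lambda>i. D (\<sigma> i)))"
proof
  fix \<sigma> :: "nat \<Rightarrow> 'k"
  show sets_eq: "sets (PiM {..<N} (\<lambda>i. D (\<sigma> i))) = sets (PiM {..<N} (\<lambda>_. mixture M D q))"
    by (rule sets_PiM_cong) (auto simp: D_sets sets_mixture[OF D_sets q])
  show "space (PiM {..<N} (\<lambda>i. D (\<sigma> i))) = space (PiM {..<N} (\<lambda>_. mixture M D q))"
    by (rule sets_eq_imp_space_eq[OF sets_eq])
  show "0 \<le> (\<Prod>i<N. q $ \<sigma> i)"
    by (intro prod_nonneg) (auto simp: prob_simplexD[OF q])
qed (auto simp: PiE_eq_empty_iff intro: finite_PiE)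

lemma PiM_mixture:
  fixes D :: "'k::finite \<Rightarrow> 'z measure"
  assumes D_prob: "\<And>k. prob_space (D k)" and D_sets: "\<And>k. sets (D k) = sets M"
    and q: "q \<in> prob_simplex"
  shows "PiM {..<N} (\<lambda>_. mixture M D q) =
    weighted_sum_measure (space (PiM {..<N} (\<lambda>_. mixture M D q)))
      (sets (PiM {..<N} (\<lambda>_. mixture M D q))) (assignments N)
      (\<lambda>\<sigma>. \<Prod>i<N. q $ \<sigma> i) (\<lambda>\<sigma>. PiM {..<N} (\<lambda>i. D (\<sigma> i)))"
proof -
  interpret W: weighted_sum "space (PiM {..<N} (\<lambda>_. mixture M D q))"
      "sets (PiM {..<N} (\<lambda>_. mixture M D q))" "assignments N"
      "\<lambda>\<sigma>. \<Prod>i<N. q $ \<sigma> i" "\<lambda>\<sigma>. PiM {..<N} (\<lambda>i. D (\<sigma> i))"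
    by (rule weighted_sum_PiM_mixture[OF D_sets q])
  interpret product_sigma_finite "\<lambda>_::nat. mixture M D q"
    using prob_space_imp_sigma_finite[OF prob_space_mixture[OF D_sets q D_prob]]
    by (simp add: product_sigma_finite_def)
  show ?thesis
  proof (rule PiM_eqI[symmetric])
    show "finite {..<N}" "sets W.W = sets (PiM {..<N} (\<lambda>_. mixture M D q))"
      by simp_all
    fix A assume A: "\<And>i. i \<in> {..<N} \<Longrightarrow> A i \<in> sets (mixture M D q)"
    then have A_sets: "A i \<in> sets M" if "i < N" for i
      using that by (simp add: sets_mixture[OF D_sets q])
    have "emeasure W.W (PiE {..<N} A) =
        (\<Sum>\<sigma>\<in>assignments N.
           ennreal (\<Prod>i<N. q $ \<sigma> i) * emeasure (PiM {..<N} (\<lambda>i. D (\<sigma> i))) (PiE {..<N} A))"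
      using A by (intro W.emeasure_W sets_PiM_I_finite) auto
    also have "\<dots> = (\<Sum>\<sigma>\<in>assignments N. \<Prod>i<N. ennreal (q $ \<sigma> i) * emeasure (D (\<sigma> i)) (A i))"
    proof (rule sum.cong[OF refl])
      fix \<sigma> :: "nat \<Rightarrow> 'k"
      interpret PD: product_sigma_finite "\<lambda>i. D (\<sigma> i)"
        using prob_space_imp_sigma_finite[OF D_prob] by (simp add: product_sigma_finite_def)
      have "emeasure (PiM {..<N} (\<lambda>i. D (\<sigma> i))) (PiE {..<N} A)
          = (\<Prod>i<N. emeasure (D (\<sigma> i)) (A i))"
        using A_sets D_sets by (intro PD.emeasure_PiM) auto
      moreover have "ennreal (\<Prod>i<N. q $ \<sigma> i) = (\<Prod>i<N. ennreal (q $ \<sigma> i))"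
        by (rule prod_ennreal[symmetric]) (simp add: prob_simplexD[OF q])
      ultimately show
        "ennreal (\<Prod>i<N. q $ \<sigma> i) * emeasure (PiM {..<N} (\<lambda>i. D (\<sigma> i))) (PiE {..<N} A)
          = (\<Prod>i<N. ennreal (q $ \<sigma> i) * emeasure (D (\<sigma> i)) (A i))"
        by (simp add: prod.distrib)
    qed
    also have "\<dots> = (\<Prod>i<N. \<Sum>k\<in>UNIV. ennreal (q $ k) * emeasure (D k) (A i))"
      by (rule prod_sum_PiE[symmetric]) auto
    also have "\<dots> = (\<Prod>i<N. emeasure (mixture M D q) (A i))"
      using A_sets by (simp add: emeasure_mixture[OF D_sets q])
    finally show "emeasure W.W (PiE {..<N} A) = (\<Prod>i\<in>{..<N}. emeasure (mixture M D q) (A i))" .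
  qed
qed

definition conditional_risk :: "('k::finite \<Rightarrow> 'z measure) \<Rightarrow> ('h \<Rightarrow> 'z \<Rightarrow> real) \<Rightarrow> nat
    \<Rightarrow> ((nat \<Rightarrow> 'z) \<Rightarrow> 'h) \<Rightarrow> 'k \<Rightarrow> (nat \<Rightarrow> 'k) \<Rightarrow> real" where
  "conditional_risk D loss N Alg k \<sigma> =
     (\<integral>S. (\<integral>z. loss (Alg S) z \<partial>D k) \<partial>PiM {..<N} (\<lambda>i. D (\<sigma> i)))"

definition sample_poly :: "nat \<Rightarrow> ((nat \<Rightarrow> 'k::finite) \<Rightarrow> real) \<Rightarrow> real^'k \<Rightarrow> real" where
  "sample_poly N C q = (\<Sum>\<sigma>\<in>assignments N. C \<sigma> * (\<Prod>i<N. q $ \<sigma> i))"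

lemma ebar_eq_sample_poly:
  fixes D :: "'k::finite \<Rightarrow> 'z measure"
  assumes D_prob: "\<And>k. prob_space (D k)" and D_sets: "\<And>k. sets (D k) = sets M"
    and q: "q \<in> prob_simplex"
    and integrable: "integrable (sample_measure N (mixture M D q) \<Otimes>\<^sub>M D k) (\<lambda>(S, z). loss (Alg S) z)"
  shows "ebar M D loss N Alg k q = sample_poly N (conditional_risk D loss N Alg k) q"
proof -
  interpret W: weighted_sum "space (PiM {..<N} (\<lambda>_. mixture M D q))"
      "sets (PiM {..<N} (\<lambda>_. mixture M D q))" "assignments N"
      "\<lambda>\<sigma>. \<Prod>i<N. q $ \<sigma> i" "\<lambda>\<sigma>. PiM {..<N} (\<lambda>i. D (\<sigma> i))"
    by (rule weighted_sum_PiM_mixture[OF D_sets q])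
  have "prob_space (PiM {..<N} (\<lambda>_. mixture M D q))"
    by (intro prob_space_PiM prob_space_mixture[OF D_sets q D_prob])
  then interpret pair_sigma_finite "PiM {..<N} (\<lambda>_. mixture M D q)" "D k"
    using prob_space_imp_sigma_finite[of "D k"] prob_space_imp_sigma_finite D_prob
    by (simp add: pair_sigma_finite_def)
  have PiM_eq: "PiM {..<N} (\<lambda>_. mixture M D q) = W.W"
    by (rule PiM_mixture[OF D_prob D_sets q])
  have "integrable (PiM {..<N} (\<lambda>_. mixture M D q)) (\<lambda>S. \<integral>z. loss (Alg S) z \<partial>D k)"
    using integrable_fst'[OF integrable[unfolded sample_measure_def]] by simp
  then have "ebar M D loss N Alg k q
      = (\<Sum>\<sigma>\<in>assignments N. (\<Prod>i<N. q $ \<sigma> i) * conditional_risk D loss N Alg k \<sigma>)"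
    unfolding ebar_def sample_measure_def conditional_risk_def by (rule W.integral_W[folded PiM_eq])
  then show ?thesis
    by (simp add: sample_poly_def mult.commute)
qed

lemma sample_poly_lower_bound:
  fixes C :: "(nat \<Rightarrow> 'k::finite) \<Rightarrow> real"
  assumes q: "q \<in> prob_simplex"
  shows "- (\<Sum>\<sigma>\<in>assignments N. \<bar>C \<sigma>\<bar>) \<le> sample_poly N C q"
proof -
  have "q $ k \<le> 1" for k
    using member_le_sum[of k UNIV "\<lambda>k. q $ k"] prob_simplexD[OF q] by simp
  then have "0 \<le> (\<Prod>i<N. q $ \<sigma> i)" "(\<Prod>i<N. q $ \<sigma> i) \<le> 1" for \<sigma> :: "nat \<Rightarrow> 'k"
    by (auto simp: prob_simplexD[OF q] intro!: prod_nonneg prod_le_1)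
  then have "\<bar>C \<sigma> * (\<Prod>i<N. q $ \<sigma> i)\<bar> \<le> \<bar>C \<sigma>\<bar>" for \<sigma> :: "nat \<Rightarrow> 'k"
    by (simp add: abs_mult mult_left_le)
  then have "\<bar>sample_poly N C q\<bar> \<le> (\<Sum>\<sigma>\<in>assignments N. \<bar>C \<sigma>\<bar>)"
    unfolding sample_poly_def by (rule order_trans[OF sum_abs sum_mono])
  then show ?thesis by simp
qed

definition sample_poly_grad :: "nat \<Rightarrow> ((nat \<Rightarrow> 'k::finite) \<Rightarrow> real) \<Rightarrow> real^'k \<Rightarrow> real^'k" where
  "sample_poly_grad N C q =
     (\<Sum>\<sigma>\<in>assignments N. \<Sum>i<N. (C \<sigma> * (\<Prod>l\<in>{..<N} - {i}. q $ \<sigma> l)) *\<^sub>R axis (\<sigma> i) 1)"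

lemma sample_poly_grad_inner:
  "sample_poly_grad N C q \<bullet> h =
     (\<Sum>\<sigma>\<in>assignments N. C \<sigma> * (\<Sum>i<N. h $ \<sigma> i * (\<Prod>l\<in>{..<N} - {i}. q $ \<sigma> l)))"
  unfolding sample_poly_grad_def inner_sum_left sum_distrib_left
  by (intro sum.cong refl) (simp add: inner_axis')

lemma has_derivative_sample_poly:
  "(sample_poly N C has_derivative (\<lambda>h. sample_poly_grad N C q \<bullet> h)) (at q within X)"
  unfolding sample_poly_grad_inner sample_poly_def [abs_def]
  by (intro has_derivative_sum has_derivative_mult_right has_derivative_prod
      bounded_linear_imp_has_derivative bounded_linear_vec_nth)

definition weighted_grad :: "nat \<Rightarrow> ('k::finite \<Rightarrow> (nat \<Rightarrow> 'k) \<Rightarrow> real) \<Rightarrow> real^'k \<Rightarrow> real^'k" where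
  "weighted_grad N C p = (\<Sum>k\<in>UNIV. p $ k *\<^sub>R sample_poly_grad N (C k) p)"

lemma vec_polyfun_sample_poly_grad: "vec_polyfun (\<lambda>q. sample_poly_grad N C q $ j)"
proof -
  have "vec_polyfun (\<lambda>q. C \<sigma> * (\<Prod>l\<in>{..<N} - {i}. q $ \<sigma> l) * axis (\<sigma> i) 1 $ j)" for \<sigma> i
    by (intro vec_polyfun_mult vec_polyfun_prod vec_polyfun_component vec_polyfun_const) auto
  then show ?thesis
    unfolding sample_poly_grad_def sum_component vector_scaleR_component
    by (intro vec_polyfun_sum) (auto intro: finite_PiE)
qed

lemma vec_polyfun_weighted_grad: "vec_polyfun (\<lambda>p. weighted_grad N C p $ j)"
proof -
  have "vec_polyfun (\<lambda>q. q $ k * sample_poly_grad N (C k) q $ j)" for k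
    by (intro vec_polyfun_mult vec_polyfun_component vec_polyfun_sample_poly_grad)
  then show ?thesis
    unfolding weighted_grad_def sum_component vector_scaleR_component
    by (intro vec_polyfun_sum) auto
qed

section \<open>Calculus on the simplex\<close>

lemma simplex_shift_mem:
  fixes p :: "real^'k::finite"
  assumes p: "p \<in> prob_simplex" and t: "\<bar>t\<bar> < min (p $ j) (p $ j')"
  shows "p + t *\<^sub>R (axis j 1 - axis j' 1) \<in> prob_simplex"
proof -
  have "(\<Sum>k\<in>UNIV. (axis j 1 - axis j' 1 :: real^'k) $ k) = 0"
    by (simp add: axis_def sum_subtractf)
  moreover have "0 \<le> p $ k + t * (axis j 1 - axis j' 1 :: real^'k) $ k" for k
    using t prob_simplexD(1)[OF p, of k] by (auto simp: axis_def)
  ultimately show ?thesis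
    using prob_simplexD(2)[OF p] by (simp add: prob_simplex_def sum.distrib sum_distrib_left[symmetric])
qed

lemma simplex_min_imp_grad_eq:
  fixes F :: "real^'k::finite \<Rightarrow> real"
  assumes F: "(F has_derivative (\<lambda>h. g \<bullet> h)) (at p)"
    and p: "p \<in> prob_simplex" "\<And>k. 0 < p $ k"
    and min: "\<And>q. q \<in> prob_simplex \<Longrightarrow> F p \<le> F q"
  shows "g $ j = g $ j'"
proof -
  define v :: "real^'k" where "v = axis j 1 - axis j' 1"
  have line: "((\<lambda>t. p + t *\<^sub>R v) has_derivative (\<lambda>t. t *\<^sub>R v)) (at 0)"
    by (auto intro!: derivative_eq_intros)
  have "(F has_derivative (\<lambda>h. g \<bullet> h)) (at (p + 0 *\<^sub>R v))"
    using F by simp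
  from has_derivative_compose[OF line this]
  have "((\<lambda>t. F (p + t *\<^sub>R v)) has_real_derivative (g $ j - g $ j')) (at 0)"
    by (rule has_derivative_imp_has_field_derivative) (simp add: v_def inner_diff_right inner_axis)
  moreover have "0 < min (p $ j) (p $ j')"
    using p(2) by simp
  moreover have "\<forall>t. \<bar>0 - t\<bar> < min (p $ j) (p $ j') \<longrightarrow> F (p + 0 *\<^sub>R v) \<le> F (p + t *\<^sub>R v)"
    using min simplex_shift_mem[OF p(1)] by (simp add: v_def)
  ultimately have "g $ j - g $ j' = 0"
    by (rule DERIV_local_min)
  then show ?thesis by simp
qed

lemma has_derivative_vsum: "(vsum has_derivative vsum) (at (p :: real^'k::finite))"
proof -
  have "((\<lambda>q::real^'k. \<Sum>k\<in>UNIV. q $ k) has_derivative (\<lambda>h. \<Sum>k\<in>UNIV. h $ k)) (at p)"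
    by (intro has_derivative_sum bounded_linear_imp_has_derivative bounded_linear_vec_nth)
  then show ?thesis unfolding vsum_def[abs_def] .
qed

lemma inner_const_components:
  fixes w :: "real^'k::finite"
  assumes "\<And>j j'. w $ j = w $ j'"
  shows "w \<bullet> x = w $ j * vsum x"
  unfolding inner_vec_def vsum_def sum_distrib_left
  using assms by (intro sum.cong refl) (metis inner_real_def)

lemma has_derivative_sum_mult_normalized:
  fixes e :: "'k::finite \<Rightarrow> real^'k \<Rightarrow> real" and de :: "'k \<Rightarrow> real^'k" and p :: "real^'k"
  defines "u \<equiv> p /\<^sub>R vsum p"
  assumes p: "0 < vsum p"
    and e: "\<And>k. (e k has_derivative (\<lambda>h. de k \<bullet> h)) (at u)"
    and const: "\<And>j j'. (\<Sum>k\<in>UNIV. u $ k *\<^sub>R de k) $ j = (\<Sum>k\<in>UNIV. u $ k *\<^sub>R de k) $ j'"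
  shows "((\<lambda>q. \<Sum>k\<in>UNIV. q $ k * e k (q /\<^sub>R vsum q)) has_derivative (\<lambda>h. (\<chi> k. e k u) \<bullet> h))
    (at p)"
proof -
  define nd where
    "nd h = inverse (vsum p) *\<^sub>R h + (- (inverse (vsum p) * vsum h * inverse (vsum p))) *\<^sub>R p"
    for h :: "real^'k"
  have "((\<lambda>q. inverse (vsum q)) has_derivative
      (\<lambda>h. - (inverse (vsum p) * vsum h * inverse (vsum p)))) (at p)"
    using p by (intro Deriv.has_derivative_inverse has_derivative_vsum) auto
  from has_derivative_scaleR[OF this has_derivative_ident]
  have "((\<lambda>q. q /\<^sub>R vsum q) has_derivative nd) (at p)"
    unfolding nd_def by simp
  from has_derivative_compose[OF this e[unfolded u_def]]
  have "((\<lambda>q. \<Sum>k\<in>UNIV. q $ k * e k (q /\<^sub>R vsum q)) has_derivative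
      (\<lambda>h. \<Sum>k\<in>UNIV. p $ k * (de k \<bullet> nd h) + h $ k * e k u)) (at p)"
    unfolding u_def
    by (intro has_derivative_sum has_derivative_mult bounded_linear_imp_has_derivative
        bounded_linear_vec_nth)
  moreover have "(\<Sum>k\<in>UNIV. p $ k * (de k \<bullet> nd h)) = 0" for h
  proof -
    have "vsum (nd h) = 0"
      using p by (simp add: nd_def vsum_def sum_subtractf sum_distrib_left[symmetric])
    then have "(\<Sum>k\<in>UNIV. u $ k *\<^sub>R de k) \<bullet> nd h = 0"
      by (metis const inner_const_components mult_zero_right)
    moreover have "p $ k = vsum p * u $ k" for k
      using p by (simp add: u_def)
    ultimately show ?thesis
      by (simp add: inner_sum_left sum_distrib_left[symmetric] mult.assoc)
  qed
  then have "(\<lambda>h. \<Sum>k\<in>UNIV. p $ k * (de k \<bullet> nd h) + h $ k * e k u) = (\<lambda>h. (\<chi> k. e k u) \<bullet> h)"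
    by (simp add: sum.distrib inner_vec_def mult.commute)
  ultimately show ?thesis
    by (rule has_derivative_eq_rhs)
qed

lemma orthant0_normalize:
  fixes p :: "real^'k::finite"
  assumes "p \<in> orthant0"
  shows "0 < vsum p" "p /\<^sub>R vsum p \<in> prob_simplex"
proof -
  have nonneg: "\<And>k. 0 \<le> p $ k" and "p \<noteq> 0"
    using assms by (auto simp: orthant0_def)
  then obtain k where "0 < p $ k"
    by (metis less_eq_real_def vec_eq_iff zero_index)
  then show pos: "0 < vsum p"
    unfolding vsum_def by (intro sum_pos2[of UNIV k]) (auto simp: nonneg)
  have "(\<Sum>k\<in>UNIV. (p /\<^sub>R vsum p) $ k) = 1"
    using pos by (simp add: vsum_def sum_distrib_left[symmetric])
  then show "p /\<^sub>R vsum p \<in> prob_simplex"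
    using pos nonneg by (simp add: prob_simplex_def)
qed

section \<open>The two alternatives\<close>

lemma Lsame_has_derivative:
  fixes e :: "'k::finite \<Rightarrow> real^'k \<Rightarrow> real" and de :: "'k \<Rightarrow> real^'k \<Rightarrow> real^'k"
  assumes ebar: "\<And>k q. q \<in> prob_simplex \<Longrightarrow> ebar M D loss N Alg k q = e k q"
    and e: "\<And>k q. (e k has_derivative (\<lambda>h. de k q \<bullet> h)) (at q)"
    and p: "p \<in> orthant0"
    and const: "\<And>j j'. (\<Sum>k\<in>UNIV. (p /\<^sub>R vsum p) $ k *\<^sub>R de k (p /\<^sub>R vsum p)) $ j
                      = (\<Sum>k\<in>UNIV. (p /\<^sub>R vsum p) $ k *\<^sub>R de k (p /\<^sub>R vsum p)) $ j'"
  shows "(Lsame M D loss N Alg has_derivative (\<lambda>h. (\<chi> k. fk M D loss N Alg k p) \<bullet> h))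
    (at p within orthant0)"
proof -
  have "(\<chi> k. fk M D loss N Alg k p) = (\<chi> k. e k (p /\<^sub>R vsum p))"
    by (simp add: fk_def ebar orthant0_normalize(2)[OF p])
  moreover have "((\<lambda>q. \<Sum>k\<in>UNIV. q $ k * e k (q /\<^sub>R vsum q)) has_derivative
      (\<lambda>h. (\<chi> k. e k (p /\<^sub>R vsum p)) \<bullet> h)) (at p)"
    by (rule has_derivative_sum_mult_normalized[OF orthant0_normalize(1)[OF p] e const])
  ultimately have D: "((\<lambda>q. \<Sum>k\<in>UNIV. q $ k * e k (q /\<^sub>R vsum q)) has_derivative
      (\<lambda>h. (\<chi> k. fk M D loss N Alg k p) \<bullet> h)) (at p within orthant0)"
    by (simp add: has_derivative_at_withinI)
  have "Lsame M D loss N Alg q = (\<Sum>k\<in>UNIV. q $ k * e k (q /\<^sub>R vsum q))" if "q \<in> orthant0" for q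
    by (simp add: Lsame_def fk_def ebar orthant0_normalize(2)[OF that])
  then show ?thesis
    by (intro has_derivative_transform_within[OF D zero_less_one p]) simp
qed

lemma Lstar_less_Lsame:
  fixes p :: "real^'k::finite"
  assumes ebar: "\<And>k q. q \<in> prob_simplex \<Longrightarrow> ebar M D loss N Alg k q = sample_poly N (C k) q"
    and p: "p \<in> prob_simplex" "\<And>k. 0 < p $ k"
    and grad_ne: "weighted_grad N C p $ j \<noteq> weighted_grad N C p $ j'"
  shows "Lstar M D loss N Alg p < Lsame M D loss N Alg p"
proof -
  define F where "F q = (\<Sum>k\<in>UNIV. p $ k * sample_poly N (C k) q)" for q
  have LN_eq: "LN M D loss N Alg p q = F q" if "q \<in> prob_simplex" for q
    by (simp add: LN_def F_def ebar[OF that])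
  have "Lsame M D loss N Alg p = F p"
    using prob_simplexD(2)[OF p(1)] by (simp add: Lsame_def fk_def F_def vsum_def ebar[OF p(1)])
  have "(F has_derivative (\<lambda>h. weighted_grad N C p \<bullet> h)) (at p)"
    unfolding F_def weighted_grad_def inner_sum_left inner_scaleR_left
    by (intro has_derivative_sum has_derivative_mult_right has_derivative_sample_poly)
  with p grad_ne obtain q where q: "q \<in> prob_simplex" "F q < F p"
    using simplex_min_imp_grad_eq[of F _ p j j'] by fastforce
  have "bdd_below (LN M D loss N Alg p ` prob_simplex)"
  proof (rule bdd_belowI2)
    fix q :: "real^'k" assume q: "q \<in> prob_simplex"
    have "(\<Sum>k\<in>UNIV. p $ k * - (\<Sum>\<sigma>\<in>assignments N. \<bar>C k \<sigma>\<bar>)) \<le> F q"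
      unfolding F_def using prob_simplexD(1)[OF p(1)]
      by (intro sum_mono mult_left_mono sample_poly_lower_bound[OF q])
    then show "(\<Sum>k\<in>UNIV. p $ k * - (\<Sum>\<sigma>\<in>assignments N. \<bar>C k \<sigma>\<bar>)) \<le> LN M D loss N Alg p q"
      by (simp add: LN_eq[OF q])
  qed
  then have "Lstar M D loss N Alg p \<le> F q"
    unfolding Lstar_def using q(1) LN_eq by (metis cINF_lower)
  with q(2) \<open>Lsame M D loss N Alg p = F p\<close> show ?thesis by simp
qed

theorem theorem7p2:
  fixes M :: "'z measure"
    and D :: "'k::finite \<Rightarrow> 'z measure"
    and loss :: "'h \<Rightarrow> 'z \<Rightarrow> real"
    and N :: nat
    and Alg :: "(nat \<Rightarrow> 'z) \<Rightarrow> 'h"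
  assumes D_prob: "\<And>k. prob_space (D k)"
    and D_sets: "\<And>k. sets (D k) = sets M"
    and N_pos: "N \<ge> 1"
    and finite_exp: "\<And>k q. q \<in> prob_simplex \<Longrightarrow>
        integrable (sample_measure N (mixture M D q) \<Otimes>\<^sub>M D k) (\<lambda>(S, z). loss (Alg S) z)"
  shows "(\<forall>p\<in>orthant0.
            (Lsame M D loss N Alg has_derivative
               (\<lambda>h. (\<chi> k. fk M D loss N Alg k p) \<bullet> h)) (at p within orthant0))
       \<or> (\<exists>U. U \<subseteq> prob_simplex \<and> simplex_null U \<and>
            (\<forall>p\<in>prob_simplex - U. Lstar M D loss N Alg p < Lsame M D loss N Alg p))"
proof -
  define C where "C k = conditional_risk D loss N Alg k" for k
  have ebar: "ebar M D loss N Alg k q = sample_poly N (C k) q" if "q \<in> prob_simplex" for k q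
    unfolding C_def using that by (intro ebar_eq_sample_poly D_prob D_sets finite_exp)
  show ?thesis
  proof (cases "\<forall>u\<in>prob_simplex. \<forall>j j'. weighted_grad N C u $ j = weighted_grad N C u $ j'")
    case True
    have "(Lsame M D loss N Alg has_derivative (\<lambda>h. (\<chi> k. fk M D loss N Alg k p) \<bullet> h))
        (at p within orthant0)" if p: "p \<in> orthant0" for p
      by (rule Lsame_has_derivative[OF ebar has_derivative_sample_poly p])
        (use True[unfolded weighted_grad_def] orthant0_normalize(2)[OF p] in auto)
    then show ?thesis by blast
  next
    case False
    then obtain u j j'
      where u: "u \<in> prob_simplex" "weighted_grad N C u $ j \<noteq> weighted_grad N C u $ j'"
      by blast
    define U where "U = {p \<in> prob_simplex. \<exists>k. p $ k = 0} \<union>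
      {p \<in> prob_simplex. weighted_grad N C p $ j - weighted_grad N C p $ j' = 0}"
    have "simplex_null U"
      unfolding U_def using u
      by (intro simplex_null_Un simplex_null_boundary simplex_null_zero_set[of _ u]
          vec_polyfun_diff vec_polyfun_weighted_grad) auto
    moreover have "Lstar M D loss N Alg p < Lsame M D loss N Alg p" if "p \<in> prob_simplex - U" for p
      using that prob_simplexD(1)[of p]
      by (intro Lstar_less_Lsame[OF ebar]) (auto simp: U_def less_le)
    moreover have "U \<subseteq> prob_simplex"
      by (auto simp: U_def)
    ultimately show ?thesis
      by blast
  qed
qed

end
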